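(* For integers $n\geq 2$ and $1\leq s\leq n$, $$\widehat{A}(n+1,s)=\frac{1}{2^{n}}\sum_{k=0}^{\lfloor (n+1)/2\rfloor}(n-2k+1)\,p(n,n-2k+1)\,E(n,k,s).$$
   Context: For a permutation $\pi$ of $[n]=\{1,\ldots,n\}$, the number of alternating descents is ${\rm altdes}(\pi)=|\{2i: \pi(2i)<\pi(2i+1)\}\cup\{2i+1:\pi(2i+1)>\pi(2i+2)\}|$, where only indices $j\in\{1,\ldots,n-1\}$ are considered. The alternating Eulerian numbers $\widehat{A}(n,k)$ are defined by $\sum_{\pi\in\mathfrak{S}_n}x^{{\rm altdes}(\pi)}=\sum_{k=0}^{n-1}\widehat{A}(n,k)x^k$. The derivative polynomials $P_n(x)$ are defined by $P_n(\tan\theta)=\frac{d^n}{d\theta^n}\tan\theta$ (equivalently $P_0(x)=x$, $P_{n+1}(x)=(1+x^2)P_n'(x)$), and $p(n,j)$ denotes the coefficient of $x^j$ in $P_n(x)$. $E(n,k,s)$ denotes the coefficient of $x^s$ in the polynomial $(1-x)^{2k}(1+x)^{n-2k}$. *)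

theory Defs
  imports "HOL-Combinatorics.Permutations" "HOL-Computational_Algebra.Polynomial"
begin

definition altdes :: "nat \<Rightarrow> (nat \<Rightarrow> nat) \<Rightarrow> nat" where
  "altdes n \<pi> = card {j \<in> {1..<n}.
      (even j \<and> \<pi> j < \<pi> (Suc j)) \<or> (odd j \<and> \<pi> j > \<pi> (Suc j))}"

definition altEuler :: "nat \<Rightarrow> nat \<Rightarrow> nat" where
  "altEuler n k = nat (coeff (\<Sum>\<pi>\<in>{\<pi>. \<pi> permutes {1..n}}. monom (1::int) (altdes n \<pi>)) k)"

fun derivPoly :: "nat \<Rightarrow> int poly" where
  "derivPoly 0 = [:0, 1:]"
| "derivPoly (Suc n) = [:1, 0, 1:] * pderiv (derivPoly n)"

definition pcoeff :: "nat \<Rightarrow> nat \<Rightarrow> int" where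
  "pcoeff n j = coeff (derivPoly n) j"

text \<open>E(n,k,s): coefficient of x^s in (1-x)^(2k) (1+x)^(n-2k).
  (Only used with 2k \<le> n or with a vanishing prefactor.)\<close>
definition Ecoef :: "nat \<Rightarrow> nat \<Rightarrow> nat \<Rightarrow> int" where
  "Ecoef n k s = coeff ([:1, -1:] ^ (2*k) * [:1, 1:] ^ (n - 2*k)) s"

end

theory Submission
  imports Defs "HOL-Combinatorics.Multiset_Permutations"
begin

(* Weight an arrangement of distinct letters by the product, over its positions j, of 1 + c y if
   j is an alternating descent and of 1 - c y otherwise, and let A(y) be the total weight of all
   arrangements of {1..n+1} for c = 1. Reversing the order of the letters shows that the sign of c
   does not matter. Inserting the largest letter at each place and averaging over c = 1 and c = -1
   yields A_(n+2) = 2 A_(n+1) + (1 + y^2) (n A_(n+1) - y A_(n+1)'), which is also the recurrence of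
   the reversal of y P_n'(y); hence A_(n+1)(y) is the sum over j of j p(n,j) y^(n+1-j). The
   substitution y = (x - 1)/(x + 1), scaled by (x + 1)^n, turns every weight into 2^n x^altdes,
   and the odd powers of y drop out by the parity of P_n. *)


section \<open>Order reversal of a finite set\<close>

definition mirror :: "'a::linorder set \<Rightarrow> 'a \<Rightarrow> 'a" where
  "mirror S x = the (map_of (zip (sorted_list_of_set S) (rev (sorted_list_of_set S))) x)"

lemma mirror_nth:
  assumes "finite S" "i < card S"
  shows "mirror S (sorted_list_of_set S ! i) = sorted_list_of_set S ! (card S - 1 - i)"
proof -
  let ?l = "sorted_list_of_set S"
  have "map_of (zip ?l (rev ?l)) (?l ! i) = Some (rev ?l ! i)"
    by (rule map_of_zip_nth) (use assms in auto)
  then show ?thesis using assms by (simp add: mirror_def rev_nth)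
qed

lemma obtain_sorted_list_of_set_index:
  assumes "finite S" "x \<in> S"
  obtains i where "i < card S" "x = sorted_list_of_set S ! i"
  using assms by (metis in_set_conv_nth length_sorted_list_of_set set_sorted_list_of_set)

lemma mirror_in:
  assumes "finite S" "x \<in> S"
  shows "mirror S x \<in> S"
proof -
  obtain i where i: "i < card S" "x = sorted_list_of_set S ! i"
    using obtain_sorted_list_of_set_index[OF assms] .
  have "card S - 1 - i < length (sorted_list_of_set S)" using i by simp
  then show ?thesis using mirror_nth[OF assms(1) i(1)] i(2) assms(1)
    by (metis nth_mem set_sorted_list_of_set)
qed

lemma mirror_mirror:
  assumes "finite S" "x \<in> S"
  shows "mirror S (mirror S x) = x"
proof -
  obtain i where i: "i < card S" "x = sorted_list_of_set S ! i"
    using obtain_sorted_list_of_set_index[OF assms] .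
  have "card S - 1 - i < card S" "card S - 1 - (card S - 1 - i) = i" using i by linarith+
  then show ?thesis using i mirror_nth[OF assms(1)] by metis
qed

lemma mirror_strict_antimono:
  assumes "finite S" "x \<in> S" "z \<in> S" "x < z"
  shows "mirror S z < mirror S x"
proof -
  let ?l = "sorted_list_of_set S"
  obtain i where i: "i < card S" "x = ?l ! i"
    using obtain_sorted_list_of_set_index[OF assms(1,2)] .
  obtain j where j: "j < card S" "z = ?l ! j"
    using obtain_sorted_list_of_set_index[OF assms(1,3)] .
  have "i < j"
    using i j assms(4) sorted_nth_mono[of ?l j i] by (metis leI length_sorted_list_of_set
        not_less sorted_sorted_list_of_set)
  then have "card S - 1 - j < card S - 1 - i" using j by linarith
  then have "?l ! (card S - 1 - j) < ?l ! (card S - 1 - i)"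
    by (rule sorted_wrt_nth_less[OF strict_sorted_list_of_set]) (use i in simp)
  then show ?thesis using mirror_nth[OF assms(1)] i j by simp
qed

lemma map_mirror_permutations_of_set:
  assumes "finite S" "xs \<in> permutations_of_set S"
  shows "map (mirror S) xs \<in> permutations_of_set S"
proof -
  have "inj_on (mirror S) S" by (metis assms(1) inj_onI mirror_mirror)
  moreover have "mirror S ` S = S"
    using assms(1) mirror_in mirror_mirror by (metis image_subsetI subsetI subset_antisym image_eqI)
  ultimately show ?thesis
    using assms(2) permutations_of_set_image_inj[of "mirror S" S] by auto
qed

lemma map_mirror_mirror:
  assumes "finite S" "set xs \<subseteq> S"
  shows "map (mirror S) (map (mirror S) xs) = xs"
  using assms by (induction xs) (auto simp: mirror_mirror)

lemma sum_permutations_of_set_mirror: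
  assumes "finite S"
  shows "(\<Sum>xs\<in>permutations_of_set S. g (map (mirror S) xs)) = (\<Sum>xs\<in>permutations_of_set S. g xs)"
  by (rule sum.reindex_bij_witness[where i = "map (mirror S)" and j = "map (mirror S)"])
    (use assms map_mirror_mirror map_mirror_permutations_of_set permutations_of_setD(1) in blast)+


definition altdes_at :: "nat \<Rightarrow> 'a::linorder \<Rightarrow> 'a \<Rightarrow> bool" where
  "altdes_at j x y \<longleftrightarrow> (even j \<and> x < y) \<or> (odd j \<and> y < x)"

definition alt_factor :: "int \<Rightarrow> nat \<Rightarrow> 'a::linorder \<Rightarrow> 'a \<Rightarrow> int poly" where
  "alt_factor c j x y = (if altdes_at j x y then [:1, c:] else [:1, -c:])"

text \<open>The \<open>i\<close>-th pair of consecutive entries of \<open>xs\<close> is treated as sitting at position \<open>e + i\<close>.\<close>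
fun alt_factors :: "int \<Rightarrow> nat \<Rightarrow> 'a::linorder list \<Rightarrow> int poly list" where
  "alt_factors c e (x # y # xs) = alt_factor c (Suc e) x y # alt_factors c (Suc e) (y # xs)"
| "alt_factors c e _ = []"

definition ascent_factor :: "int \<Rightarrow> nat \<Rightarrow> int poly" where
  "ascent_factor c j = (if even j then [:1, c:] else [:1, -c:])"

lemma alt_factor_less: "x < y \<Longrightarrow> alt_factor c j x y = ascent_factor c j"
  by (auto simp: alt_factor_def altdes_at_def ascent_factor_def)

lemma alt_factor_greater: "y < x \<Longrightarrow> alt_factor c (Suc j) x y = ascent_factor c j"
  by (auto simp: alt_factor_def altdes_at_def ascent_factor_def)

lemma alt_factor_Suc: "x \<noteq> y \<Longrightarrow> alt_factor c (Suc j) x y = alt_factor (-c) j x y"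
  by (auto simp: alt_factor_def altdes_at_def)

lemma alt_factor_order_reversed:
  assumes "x \<noteq> y" "x' < y' \<longleftrightarrow> y < x" "y' < x' \<longleftrightarrow> x < y"
  shows "alt_factor c j x' y' = alt_factor (-c) j x y"
  using assms by (auto simp: alt_factor_def altdes_at_def)

lemma length_alt_factors: "length (alt_factors c e xs) = length xs - 1"
  by (induction c e xs rule: alt_factors.induct) auto

lemma alt_factors_linear: "p \<in> set (alt_factors c e xs) \<Longrightarrow> \<exists>s. p = [:1, s:]"
  by (induction c e xs rule: alt_factors.induct) (auto simp: alt_factor_def)

lemma alt_factors_append:
  "alt_factors c e (xs @ y # ys) = alt_factors c e (xs @ [y]) @ alt_factors c (e + length xs) (y # ys)"
proof (induction xs arbitrary: e)
  case (Cons a xs)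
  then show ?case by (cases xs) auto
qed simp

lemma alt_factors_Suc: "distinct xs \<Longrightarrow> alt_factors c (Suc e) xs = alt_factors (-c) e xs"
  by (induction c e xs rule: alt_factors.induct) (auto simp: alt_factor_Suc)

lemma alt_factors_strict_antimono:
  assumes "distinct xs" "\<And>x z. x \<in> set xs \<Longrightarrow> z \<in> set xs \<Longrightarrow> x < z \<Longrightarrow> f z < f x"
  shows "alt_factors c e (map f xs) = alt_factors (-c) e xs"
  using assms
proof (induction c e xs rule: alt_factors.induct)
  case (1 c e x y xs)
  have "x \<noteq> y" using "1.prems"(1) by auto
  then have "alt_factor c (Suc e) (f x) (f y) = alt_factor (-c) (Suc e) x y"
    using "1.prems"(2)[of x y] "1.prems"(2)[of y x]
    by (intro alt_factor_order_reversed) (auto, (metis less_asym neq_iff)+)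
  with 1 show ?case by auto
qed auto

lemma alt_factors_mirror:
  assumes "distinct xs" "finite S" "set xs \<subseteq> S"
  shows "alt_factors c e (map (mirror S) xs) = alt_factors (-c) e xs"
  using assms by (intro alt_factors_strict_antimono) (auto intro: mirror_strict_antimono)

definition alt_poly :: "int \<Rightarrow> 'a::linorder set \<Rightarrow> int poly" where
  "alt_poly c V = (\<Sum>xs\<in>permutations_of_set V. prod_list (alt_factors c 0 xs))"

definition alt_poly_cut :: "int \<Rightarrow> 'a::linorder set \<Rightarrow> nat \<Rightarrow> int poly" where
  "alt_poly_cut c V k = (\<Sum>xs\<in>permutations_of_set V.
     prod_list (alt_factors c 0 (take k xs)) * prod_list (alt_factors c k (drop k xs)))"

lemma alt_poly_uminus:
  assumes "finite V"
  shows "alt_poly (-c) V = alt_poly c V"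
proof -
  have "alt_poly c V = (\<Sum>xs\<in>permutations_of_set V. prod_list (alt_factors c 0 (map (mirror V) xs)))"
    unfolding alt_poly_def by (rule sum_permutations_of_set_mirror[OF assms, symmetric])
  also have "\<dots> = alt_poly (-c) V"
    unfolding alt_poly_def
  proof (rule sum.cong)
    fix xs assume "xs \<in> permutations_of_set V"
    then show "prod_list (alt_factors c 0 (map (mirror V) xs)) = prod_list (alt_factors (-c) 0 xs)"
      using assms alt_factors_mirror[of xs V] by (simp add: permutations_of_setD)
  qed simp
  finally show ?thesis by simp
qed

lemma alt_poly_cut_uminus:
  assumes "finite V"
  shows "alt_poly_cut (-c) V k = alt_poly_cut c V k"
proof -
  have "alt_poly_cut c V k = (\<Sum>xs\<in>permutations_of_set V.
      prod_list (alt_factors c 0 (take k (map (mirror V) xs)))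
      * prod_list (alt_factors c k (drop k (map (mirror V) xs))))"
    unfolding alt_poly_cut_def by (rule sum_permutations_of_set_mirror[OF assms, symmetric])
  also have "\<dots> = alt_poly_cut (-c) V k"
    unfolding alt_poly_cut_def take_map drop_map
  proof (rule sum.cong)
    fix xs assume "xs \<in> permutations_of_set V"
    then have "distinct xs" "set xs = V" by (auto dest: permutations_of_setD)
    then have "set (take k xs) \<subseteq> V" "set (drop k xs) \<subseteq> V"
      by (auto dest: in_set_takeD in_set_dropD)
    with \<open>distinct xs\<close> show "prod_list (alt_factors c 0 (map (mirror V) (take k xs)))
        * prod_list (alt_factors c k (map (mirror V) (drop k xs)))
      = prod_list (alt_factors (-c) 0 (take k xs)) * prod_list (alt_factors (-c) k (drop k xs))"
      using assms by (simp add: alt_factors_mirror)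
  qed simp
  finally show ?thesis by simp
qed

definition mirror_suffix :: "nat \<Rightarrow> 'a::linorder list \<Rightarrow> 'a list" where
  "mirror_suffix k xs = take k xs @ map (mirror (set (drop k xs))) (drop k xs)"

lemma mirror_suffix_permutations_of_set:
  assumes "xs \<in> permutations_of_set V"
  shows "mirror_suffix k xs \<in> permutations_of_set V" "mirror_suffix k (mirror_suffix k xs) = xs"
proof -
  have xs: "distinct xs" "set xs = V" using assms by (auto dest: permutations_of_setD)
  let ?D = "set (drop k xs)"
  have D: "map (mirror ?D) (drop k xs) \<in> permutations_of_set ?D"
    by (rule map_mirror_permutations_of_set) (use xs in \<open>auto intro: permutations_of_setI\<close>)
  have "set (take k xs) \<inter> ?D = {}" using xs by (simp add: set_take_disj_set_drop_if_distinct)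
  then have distinct: "distinct (mirror_suffix k xs)"
    using permutations_of_setD[OF D] xs by (simp add: mirror_suffix_def)
  have "set (mirror_suffix k xs) = set (take k xs @ drop k xs)"
    using permutations_of_setD[OF D] by (simp add: mirror_suffix_def del: append_take_drop_id)
  with xs have "set (mirror_suffix k xs) = V" by simp
  with distinct show "mirror_suffix k xs \<in> permutations_of_set V" by (intro permutations_of_setI)
  have "drop k (mirror_suffix k xs) = map (mirror ?D) (drop k xs)"
    by (cases "k \<le> length xs") (auto simp: mirror_suffix_def)
  moreover have "take k (mirror_suffix k xs) = take k xs"
    by (cases "k \<le> length xs") (auto simp: mirror_suffix_def)
  ultimately show "mirror_suffix k (mirror_suffix k xs) = xs"
    using permutations_of_setD[OF D] map_mirror_mirror[of ?D "drop k xs"]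
    by (simp add: mirror_suffix_def[of k "mirror_suffix k xs"])
qed

text \<open>Mirroring the suffix after the cut turns its factors for \<open>-c\<close> into those for \<open>c\<close>.\<close>
lemma alt_poly_cut_flip:
  "(\<Sum>xs\<in>permutations_of_set V.
      prod_list (alt_factors c 0 (take k xs)) * prod_list (alt_factors (-c) k (drop k xs)))
   = alt_poly_cut c V k"
  unfolding alt_poly_cut_def
proof (rule sum.reindex_bij_witness[where i = "mirror_suffix k" and j = "mirror_suffix k"])
  fix xs assume xs: "xs \<in> permutations_of_set V"
  then have "distinct (drop k xs)" by (auto dest: permutations_of_setD)
  then have "alt_factors c k (map (mirror (set (drop k xs))) (drop k xs)) = alt_factors (-c) k (drop k xs)"
    using alt_factors_mirror[of "drop k xs" "set (drop k xs)" c k] by simp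
  then show "prod_list (alt_factors c 0 (take k (mirror_suffix k xs)))
      * prod_list (alt_factors c k (drop k (mirror_suffix k xs)))
    = prod_list (alt_factors c 0 (take k xs)) * prod_list (alt_factors (-c) k (drop k xs))"
    by (cases "k \<le> length xs") (auto simp: mirror_suffix_def)
qed (simp_all add: mirror_suffix_permutations_of_set)


section \<open>Inserting the largest letter\<close>

definition insert_at :: "nat \<Rightarrow> 'a \<Rightarrow> 'a list \<Rightarrow> 'a list" where
  "insert_at k x xs = take k xs @ x # drop k xs"

lemma insert_at_permutations_of_set:
  assumes "xs \<in> permutations_of_set V" "M \<notin> V"
  shows "insert_at k M xs \<in> permutations_of_set (insert M V)"
proof -
  have xs: "distinct xs" "set xs = V" using assms(1) by (auto dest: permutations_of_setD)
  have "set (take k xs) \<inter> set (drop k xs) = {}" using xs by (simp add: set_take_disj_set_drop_if_distinct)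
  moreover have "M \<notin> set (take k xs)" "M \<notin> set (drop k xs)"
    using xs assms(2) by (auto dest: in_set_takeD in_set_dropD)
  moreover have "set (take k xs) \<union> set (drop k xs) = V"
    using xs by (metis append_take_drop_id set_append)
  ultimately show ?thesis using xs by (auto simp: insert_at_def intro!: permutations_of_setI)
qed

lemma takeWhile_neq_append: "x \<notin> set xs \<Longrightarrow> takeWhile (\<lambda>y. y \<noteq> x) (xs @ x # ys) = xs"
  by (induction xs) auto

lemma sum_permutations_of_set_insert:
  assumes "finite V" "M \<notin> V"
  shows "(\<Sum>ys\<in>permutations_of_set (insert M V). h ys)
       = (\<Sum>xs\<in>permutations_of_set V. \<Sum>k\<le>card V. h (insert_at k M xs))"
proof -
  let ?pos = "\<lambda>ys. length (takeWhile (\<lambda>x. x \<noteq> M) ys)"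
  let ?ins = "\<lambda>(xs, k). insert_at k M xs" and ?del = "\<lambda>ys. (remove1 M ys, ?pos ys)"
  have "(\<Sum>ys\<in>permutations_of_set (insert M V). h ys)
      = (\<Sum>p\<in>permutations_of_set V \<times> {..card V}. h (?ins p))"
  proof (rule sum.reindex_bij_witness[where j = ?del and i = ?ins and h = "\<lambda>p. h (?ins p)"])
    fix ys assume ys: "ys \<in> permutations_of_set (insert M V)"
    then obtain A D where AD: "ys = A @ M # D" "M \<notin> set A"
      by (metis insertI1 permutations_of_setD(1) split_list_first)
    have "distinct ys" "set ys = insert M V" using ys by (auto dest: permutations_of_setD)
    then have AD': "M \<notin> set D" "set (A @ D) = V" "distinct (A @ D)" using AD assms(2) by auto
    then have "length A \<le> card V" by (metis distinct_card le_add1 length_append)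
    moreover have "?del ys = (A @ D, length A)"
      using AD by (simp add: remove1_append takeWhile_neq_append)
    ultimately show "?ins (?del ys) = ys" and "?del ys \<in> permutations_of_set V \<times> {..card V}"
      using AD AD' by (auto simp: insert_at_def intro!: permutations_of_setI)
    then show "h (?ins (?del ys)) = h ys" by simp
  next
    fix p assume "p \<in> permutations_of_set V \<times> {..card V}"
    then obtain xs k where p: "p = (xs, k)" "xs \<in> permutations_of_set V" "k \<le> card V" by auto
    then have "M \<notin> set (take k xs)" "M \<notin> set (drop k xs)" "k \<le> length xs"
      using assms(2) by (auto dest: permutations_of_setD in_set_takeD in_set_dropD
          simp: length_finite_permutations_of_set)
    then show "?del (?ins p) = p"
      using p by (simp add: insert_at_def remove1_append takeWhile_neq_append)
    show "?ins p \<in> permutations_of_set (insert M V)"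
      using p assms(2) by (simp add: insert_at_permutations_of_set)
  qed
  also have "\<dots> = (\<Sum>xs\<in>permutations_of_set V. \<Sum>k\<le>card V. h (insert_at k M xs))"
    by (simp add: sum.cartesian_product split_def)
  finally show ?thesis .
qed

lemma prod_alt_factors_Cons_greater:
  assumes "xs \<noteq> []" "distinct xs" "\<forall>x\<in>set xs. x < M"
  shows "prod_list (alt_factors c 0 (M # xs)) = [:1, c:] * prod_list (alt_factors (-c) 0 xs)"
proof -
  obtain b B where xs: "xs = b # B" using assms(1) by (cases xs) auto
  then show ?thesis
    using assms alt_factor_greater[of b M c 0] alt_factors_Suc[of xs c 0]
    by (simp add: ascent_factor_def)
qed

lemma prod_alt_factors_snoc_greater:
  assumes "xs \<noteq> []" "\<forall>x\<in>set xs. x < M"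
  shows "prod_list (alt_factors c 0 (xs @ [M])) = prod_list (alt_factors c 0 xs) * ascent_factor c (length xs)"
proof -
  obtain A a where xs: "xs = A @ [a]" using assms(1) by (cases xs rule: rev_exhaust) auto
  have "alt_factors c 0 (A @ [a, M]) = alt_factors c 0 (A @ [a]) @ [alt_factor c (Suc (length A)) a M]"
    using alt_factors_append[of c 0 A a "[M]"] by simp
  then show ?thesis using assms(2) xs alt_factor_less[of a M] by simp
qed

lemma prod_alt_factors_insert_at_greater:
  assumes "0 < k" "k < length xs" "distinct xs" "\<forall>x\<in>set xs. x < M"
  shows "prod_list (alt_factors c 0 (insert_at k M xs))
       = ascent_factor c k ^ 2 * (prod_list (alt_factors c 0 (take k xs))
           * prod_list (alt_factors (-c) k (drop k xs)))"
proof -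
  obtain A a where ta: "take k xs = A @ [a]" using assms(1,2)
    by (cases "take k xs" rule: rev_exhaust) auto
  obtain b B where db: "drop k xs = b # B" using assms(2)
    by (cases "drop k xs") auto
  have k: "k = Suc (length A)" using ta assms(1,2) by (metis length_append_singleton length_take min.absorb4)
  have "a \<in> set (take k xs)" "b \<in> set (drop k xs)" using ta db by simp_all
  then have "a < M" "b < M" using assms(4) by (auto dest: in_set_takeD in_set_dropD)
  have "distinct (b # B)" using assms(3) db by (metis distinct_drop)
  have "alt_factors c 0 (A @ a # M # b # B)
      = alt_factors c 0 (A @ [a]) @ alt_factor c k a M # alt_factor c (Suc k) M b # alt_factors c (Suc k) (b # B)"
    using alt_factors_append[of c 0 A a "M # b # B"] k by simp
  moreover have "alt_factors c (Suc k) (b # B) = alt_factors (-c) k (b # B)"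
    using alt_factors_Suc \<open>distinct (b # B)\<close> by blast
  moreover have "alt_factor c k a M = ascent_factor c k" "alt_factor c (Suc k) M b = ascent_factor c k"
    using \<open>a < M\<close> \<open>b < M\<close> by (simp_all add: alt_factor_less alt_factor_greater)
  ultimately show ?thesis using ta db by (simp add: insert_at_def power2_eq_square algebra_simps)
qed

lemma sum_insert_at_greater:
  assumes "distinct xs" "length xs = Suc n" "\<forall>x\<in>set xs. x < M"
  shows "(\<Sum>k\<le>Suc n. prod_list (alt_factors c 0 (insert_at k M xs)))
       = [:1, c:] * prod_list (alt_factors (-c) 0 xs) + ascent_factor c (Suc n) * prod_list (alt_factors c 0 xs)
         + (\<Sum>k=1..n. ascent_factor c k ^ 2 * (prod_list (alt_factors c 0 (take k xs))
             * prod_list (alt_factors (-c) k (drop k xs))))"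
proof -
  have ends: "(\<Sum>k\<le>Suc n. f k) = f 0 + f (Suc n) + (\<Sum>k=1..n. f k)" for f :: "nat \<Rightarrow> int poly"
    by (simp add: sum.atMost_Suc atMost_atLeast0 sum.atLeast_Suc_atMost)
  have "xs \<noteq> []" using assms(2) by auto
  show ?thesis
    unfolding ends
  proof (intro arg_cong2[where f = "(+)"] sum.cong refl)
    show "prod_list (alt_factors c 0 (insert_at 0 M xs)) = [:1, c:] * prod_list (alt_factors (-c) 0 xs)"
      using prod_alt_factors_Cons_greater[OF \<open>xs \<noteq> []\<close> assms(1,3)] by (simp add: insert_at_def)
    show "prod_list (alt_factors c 0 (insert_at (Suc n) M xs))
        = ascent_factor c (Suc n) * prod_list (alt_factors c 0 xs)"
      using prod_alt_factors_snoc_greater[OF \<open>xs \<noteq> []\<close> assms(3)] assms(2)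
      by (simp add: insert_at_def mult.commute)
  next
    fix k assume "k \<in> {1..n}"
    then show "prod_list (alt_factors c 0 (insert_at k M xs)) = ascent_factor c k ^ 2
        * (prod_list (alt_factors c 0 (take k xs)) * prod_list (alt_factors (-c) k (drop k xs)))"
      using assms by (intro prod_alt_factors_insert_at_greater) auto
  qed
qed

lemma alt_poly_insert_greater:
  assumes "finite V" "\<forall>x\<in>V. x < M" "card V = Suc n"
  shows "alt_poly c (insert M V) = [:1, c:] * alt_poly (-c) V + ascent_factor c (Suc n) * alt_poly c V
           + (\<Sum>k=1..n. ascent_factor c k ^ 2 * alt_poly_cut c V k)"
proof -
  let ?P = "permutations_of_set V"
  have "M \<notin> V" using assms(2) by auto
  have "alt_poly c (insert M V) = (\<Sum>xs\<in>?P. \<Sum>k\<le>Suc n. prod_list (alt_factors c 0 (insert_at k M xs)))"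
    unfolding alt_poly_def using sum_permutations_of_set_insert[OF assms(1) \<open>M \<notin> V\<close>] assms(3) by simp
  also have "\<dots> = (\<Sum>xs\<in>?P. [:1, c:] * prod_list (alt_factors (-c) 0 xs)
        + ascent_factor c (Suc n) * prod_list (alt_factors c 0 xs)
        + (\<Sum>k=1..n. ascent_factor c k ^ 2 * (prod_list (alt_factors c 0 (take k xs))
            * prod_list (alt_factors (-c) k (drop k xs)))))"
    by (intro sum.cong refl sum_insert_at_greater)
      (use assms in \<open>auto dest: permutations_of_setD simp: length_finite_permutations_of_set\<close>)
  also have "\<dots> = [:1, c:] * alt_poly (-c) V + ascent_factor c (Suc n) * alt_poly c V
           + (\<Sum>k=1..n. ascent_factor c k ^ 2 * alt_poly_cut c V k)"
    unfolding sum.distrib alt_poly_def sum_distrib_left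
    by (subst sum.swap) (simp only: sum_distrib_left[symmetric] alt_poly_cut_flip)
  finally show ?thesis .
qed


lemma smult_sum_right: "smult c (sum f A) = (\<Sum>x\<in>A. smult c (f x))"
  by (induction A rule: infinite_finite_induct) (auto simp: smult_add_right)

lemma two_times_poly: "(2 :: 'a::comm_ring_1 poly) * p = smult 2 p"
  by (metis mult.commute mult_2_right one_add_one smult_1_left smult_add_left)

lemma pderiv_sum: "pderiv (sum f A) = (\<Sum>x\<in>A. pderiv (f x))"
  using higher_pderiv_sum[of 1] by simp

lemma sum_prod_list_remove_nth:
  fixes L :: "'a::idom poly list"
  assumes "\<forall>p\<in>set L. \<exists>s. p = [:1, s:]"
  shows "(\<Sum>i<length L. prod_list (take i L @ drop (Suc i) L))
       = of_nat (length L) * prod_list L - [:0, 1:] * pderiv (prod_list L)"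
  using assms
proof (induction L)
  case (Cons a L)
  obtain s where a: "a = [:1, s:]" using Cons.prems by auto
  have "(\<Sum>i<length (a # L). prod_list (take i (a # L) @ drop (Suc i) (a # L)))
      = prod_list L + a * (\<Sum>i<length L. prod_list (take i L @ drop (Suc i) L))"
    unfolding length_Cons sum.lessThan_Suc_shift by (simp add: sum_distrib_left mult.assoc)
  also have "\<dots> = prod_list L + a * (of_nat (length L) * prod_list L - [:0, 1:] * pderiv (prod_list L))"
    using Cons by simp
  also have "\<dots> = (of_nat (length L) + 1) * (a * prod_list L)
      - [:0, 1:] * (a * pderiv (prod_list L) + prod_list L * pderiv a)"
  proof -
    have "pderiv a = [:s:]" "a = 1 + [:0, 1:] * [:s:]" using a by (simp_all add: pderiv_pCons one_pCons)
    then show ?thesis by (simp add: algebra_simps)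
  qed
  also have "\<dots> = of_nat (length (a # L)) * prod_list (a # L) - [:0, 1:] * pderiv (prod_list (a # L))"
    by (simp add: pderiv_mult)
  finally show ?case .
qed simp

lemma prod_alt_factors_cut:
  assumes "length xs = Suc n" "0 < k" "k \<le> n"
  shows "prod_list (alt_factors c 0 (take k xs)) * prod_list (alt_factors c k (drop k xs))
       = prod_list (take (k - 1) (alt_factors c 0 xs) @ drop k (alt_factors c 0 xs))"
proof -
  obtain A a where ta: "take k xs = A @ [a]" using assms
    by (cases "take k xs" rule: rev_exhaust) auto
  obtain b B where db: "drop k xs = b # B" using assms
    by (cases "drop k xs") auto
  have "length (take k xs) = k" using assms by simp
  then have lenA: "length A = k - 1" using ta by simp
  have "xs = take k xs @ drop k xs" by simp
  then have "alt_factors c 0 xs = alt_factors c 0 (A @ [a]) @ alt_factor c k a b # alt_factors c k (b # B)"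
    using ta db lenA alt_factors_append[of c 0 A a "b # B"] assms(2) by simp
  moreover have "length (alt_factors c 0 (A @ [a])) = k - 1"
    using lenA by (simp add: length_alt_factors)
  ultimately show ?thesis using ta db assms(2)
    by (simp add: nth_append drop_Cons' take_Cons')
qed

lemma sum_alt_poly_cut:
  assumes "card V = Suc n"
  shows "(\<Sum>k=1..n. alt_poly_cut c V k) = of_nat n * alt_poly c V - [:0, 1:] * pderiv (alt_poly c V)"
proof -
  let ?L = "\<lambda>xs. alt_factors c 0 xs"
  have "(\<Sum>k=1..n. alt_poly_cut c V k) = (\<Sum>xs\<in>permutations_of_set V.
      \<Sum>k=1..n. prod_list (alt_factors c 0 (take k xs)) * prod_list (alt_factors c k (drop k xs)))"
    unfolding alt_poly_cut_def by (rule sum.swap)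
  also have "\<dots> = (\<Sum>xs\<in>permutations_of_set V.
      of_nat n * prod_list (?L xs) - [:0, 1:] * pderiv (prod_list (?L xs)))"
  proof (rule sum.cong[OF refl])
    fix xs assume "xs \<in> permutations_of_set V"
    then have xs: "length xs = Suc n" using assms by (simp add: length_finite_permutations_of_set)
    then have "length (?L xs) = n" by (simp add: length_alt_factors)
    have "(\<Sum>k=1..n. prod_list (alt_factors c 0 (take k xs)) * prod_list (alt_factors c k (drop k xs)))
        = (\<Sum>k=1..n. prod_list (take (k - 1) (?L xs) @ drop k (?L xs)))"
      by (rule sum.cong) (use prod_alt_factors_cut[OF xs] in auto)
    also have "\<dots> = (\<Sum>i<n. prod_list (take i (?L xs) @ drop (Suc i) (?L xs)))"
      by (simp add: sum.atLeast1_atMost_eq)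
    also have "\<dots> = of_nat n * prod_list (?L xs) - [:0, 1:] * pderiv (prod_list (?L xs))"
      using sum_prod_list_remove_nth[of "?L xs"] alt_factors_linear[of _ c 0 xs] \<open>length (?L xs) = n\<close>
      by blast
    finally show "(\<Sum>k=1..n. prod_list (alt_factors c 0 (take k xs)) * prod_list (alt_factors c k (drop k xs)))
        = of_nat n * prod_list (?L xs) - [:0, 1:] * pderiv (prod_list (?L xs))" .
  qed
  also have "\<dots> = of_nat n * alt_poly c V - [:0, 1:] * pderiv (alt_poly c V)"
    by (simp add: alt_poly_def sum_subtractf sum_distrib_left pderiv_sum)
  finally show ?thesis .
qed

lemma alt_poly_insert_greater_rec:
  assumes "finite V" "\<forall>x\<in>V. x < M" "card V = Suc n"
  shows "alt_poly 1 (insert M V) = [:2:] * alt_poly 1 V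
           + [:1, 0, 1:] * (of_nat n * alt_poly 1 V - [:0, 1:] * pderiv (alt_poly 1 V))"
proof -
  let ?X = "alt_poly 1 (insert M V)" and ?R = "alt_poly 1 V"
  let ?a = "ascent_factor 1" and ?b = "ascent_factor (-1)" and ?T = "alt_poly_cut 1 V"
  have plus: "?X = [:1, 1:] * ?R + ?a (Suc n) * ?R + (\<Sum>k=1..n. ?a k ^ 2 * ?T k)"
    using alt_poly_insert_greater[OF assms, of 1] alt_poly_uminus[OF assms(1), of 1] by simp
  have minus: "?X = [:1, -1:] * ?R + ?b (Suc n) * ?R + (\<Sum>k=1..n. ?b k ^ 2 * ?T k)"
    using alt_poly_insert_greater[OF assms, of "-1"] alt_poly_uminus[OF assms(1), of 1]
      alt_poly_uminus[of "insert M V" 1] alt_poly_cut_uminus[OF assms(1), of 1] assms(1) by simp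
  have "?X + ?X = ([:1, 1:] * ?R + ?a (Suc n) * ?R + (\<Sum>k=1..n. ?a k ^ 2 * ?T k))
      + ([:1, -1:] * ?R + ?b (Suc n) * ?R + (\<Sum>k=1..n. ?b k ^ 2 * ?T k))"
    using plus minus by (rule arg_cong2[where f = "(+)"])
  also have "\<dots> = ([:1, 1:] + [:1, -1:]) * ?R + (?a (Suc n) + ?b (Suc n)) * ?R
      + (\<Sum>k=1..n. (?a k ^ 2 + ?b k ^ 2) * ?T k)"
    by (simp only: distrib_right sum.distrib add_ac)
  text \<open>Averaging over \<open>c = \<plusminus>1\<close> removes the dependence on parities.\<close>
  also have "\<dots> = smult 2 ([:2:] * ?R + [:1, 0, 1:] * (\<Sum>k=1..n. ?T k))"
  proof -
    have "?a j + ?b j = [:2:]" "?a j ^ 2 + ?b j ^ 2 = smult 2 [:1, 0, 1:]" for j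
      by (simp_all add: ascent_factor_def power2_eq_square)
    then show ?thesis
      by (simp add: smult_add_right sum_distrib_left smult_sum_right two_times_poly)
  qed
  finally have "smult 2 ?X = smult 2 ([:2:] * ?R + [:1, 0, 1:] * (\<Sum>k=1..n. ?T k))"
    by (simp only: mult_2[symmetric] two_times_poly)
  then have "?X = [:2:] * ?R + [:1, 0, 1:] * (\<Sum>k=1..n. ?T k)" by (rule smult_cancel[rotated]) simp
  then show ?thesis using sum_alt_poly_cut[OF assms(3)] by simp
qed


section \<open>The derivative polynomials\<close>

lemma coeff_one_plus_x_squared_mult:
  fixes p :: "'a::comm_semiring_1 poly"
  shows "coeff ([:1, 0, 1:] * p) j = coeff p j + (if 2 \<le> j then coeff p (j - 2) else 0)"
  by (cases j; cases "j - 1") (auto simp: coeff_pCons)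

lemma pcoeff_Suc:
  "pcoeff (Suc n) j = of_nat (Suc j) * pcoeff n (Suc j)
     + (if 2 \<le> j then of_nat (j - 1) * pcoeff n (j - 1) else 0)"
proof -
  have "pcoeff (Suc n) j = coeff (pderiv (derivPoly n)) j
      + (if 2 \<le> j then coeff (pderiv (derivPoly n)) (j - 2) else 0)"
    by (simp only: pcoeff_def derivPoly.simps coeff_one_plus_x_squared_mult)
  moreover have "2 \<le> j \<Longrightarrow> Suc (j - 2) = j - 1" by simp
  ultimately show ?thesis by (simp add: coeff_pderiv pcoeff_def)
qed

lemma pcoeff_eq_0_degree: "n + 1 < j \<Longrightarrow> pcoeff n j = 0"
proof (induction n arbitrary: j)
  case 0
  then show ?case by (simp add: pcoeff_def coeff_pCons split: nat.split)
qed (simp add: pcoeff_Suc)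

lemma pcoeff_eq_0_parity: "even (n + j) \<Longrightarrow> pcoeff n j = 0"
proof (induction n arbitrary: j)
  case 0
  then show ?case by (cases j; cases "j - 1") (auto simp: pcoeff_def coeff_pCons)
next
  case (Suc n)
  then show ?case by (simp add: pcoeff_Suc even_add)
qed

text \<open>The coefficients of \<open>x\<^sup>n\<^sup>+\<^sup>1 R(1/x)\<close> for \<open>R = x P\<^sub>n'(x)\<close>, a polynomial of degree \<open>n + 1\<close>.\<close>
definition rev_deriv_coeff :: "nat \<Rightarrow> nat \<Rightarrow> int" where
  "rev_deriv_coeff n u = int (n + 1 - u) * pcoeff n (n + 1 - u)"

definition rev_deriv_poly :: "nat \<Rightarrow> int poly" where
  "rev_deriv_poly n = (\<Sum>u\<le>n. monom (rev_deriv_coeff n u) u)"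

lemma coeff_rev_deriv_poly: "coeff (rev_deriv_poly n) u = rev_deriv_coeff n u"
  by (cases "u \<le> n") (simp_all add: rev_deriv_poly_def coeff_sum coeff_monom rev_deriv_coeff_def)

lemma rev_deriv_coeff_Suc:
  "rev_deriv_coeff (Suc n) u
     = (int n + 2 - int u) * (rev_deriv_coeff n u + (if 2 \<le> u then rev_deriv_coeff n (u - 2) else 0))"
proof (cases "u \<le> n + 1")
  case True
  define j where "j = n + 1 - u"
  have "rev_deriv_coeff (Suc n) u = int (Suc j) * pcoeff (Suc n) (Suc j)"
    using True by (simp add: rev_deriv_coeff_def j_def Suc_diff_le)
  also have "\<dots> = int (Suc j) * (int (j + 2) * pcoeff n (j + 2) + int j * pcoeff n j)"
    by (cases j) (simp_all add: pcoeff_Suc)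
  also have "int (j + 2) * pcoeff n (j + 2) = (if 2 \<le> u then rev_deriv_coeff n (u - 2) else 0)"
  proof (cases "2 \<le> u")
    case True
    then have "n + 1 - (u - 2) = j + 2" using \<open>u \<le> n + 1\<close> by (simp add: j_def)
    with True show ?thesis by (simp add: rev_deriv_coeff_def)
  next
    case False
    then show ?thesis by (simp add: j_def pcoeff_eq_0_degree)
  qed
  finally show ?thesis
    using True by (simp add: rev_deriv_coeff_def j_def algebra_simps of_nat_diff)
next
  case False
  then show ?thesis by (cases "u = n + 2") (simp_all add: rev_deriv_coeff_def)
qed

lemma rev_deriv_poly_Suc:
  "rev_deriv_poly (Suc n) = [:2:] * rev_deriv_poly n
     + [:1, 0, 1:] * (of_nat n * rev_deriv_poly n - [:0, 1:] * pderiv (rev_deriv_poly n))"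
proof (rule poly_eqI)
  fix u
  have euler: "coeff (of_nat n * rev_deriv_poly n - [:0, 1:] * pderiv (rev_deriv_poly n)) v
      = (int n - int v) * rev_deriv_coeff n v" for v
    by (cases v) (simp_all add: coeff_pderiv coeff_rev_deriv_poly of_nat_poly algebra_simps)
  show "coeff (rev_deriv_poly (Suc n)) u = coeff ([:2:] * rev_deriv_poly n
      + [:1, 0, 1:] * (of_nat n * rev_deriv_poly n - [:0, 1:] * pderiv (rev_deriv_poly n))) u"
    unfolding coeff_add coeff_one_plus_x_squared_mult euler
    by (simp add: coeff_rev_deriv_poly rev_deriv_coeff_Suc algebra_simps)
qed

lemma alt_poly_eq_rev_deriv_poly: "alt_poly 1 {1..Suc n} = rev_deriv_poly n"
proof (induction n)
  case 0
  show ?case by (simp add: alt_poly_def rev_deriv_poly_def rev_deriv_coeff_def pcoeff_def)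
next
  case (Suc n)
  have "{1..Suc (Suc n)} = insert (Suc (Suc n)) {1..Suc n}" by auto
  then show ?case
    using alt_poly_insert_greater_rec[of "{1..Suc n}" "Suc (Suc n)" n] Suc rev_deriv_poly_Suc[of n] by simp
qed

lemma rev_deriv_coeff_odd: "odd u \<Longrightarrow> rev_deriv_coeff n u = 0"
  by (cases "u \<le> n + 1") (simp_all add: rev_deriv_coeff_def pcoeff_eq_0_parity)


section \<open>The Cayley transform\<close>

text \<open>For \<open>degree p \<le> m\<close> this is \<open>(x + 1)\<^sup>m p((x - 1)/(x + 1))\<close>; it sends \<open>1 + x\<close> to \<open>2x\<close>
  and \<open>1 - x\<close> to \<open>2\<close>.\<close>
definition cayley :: "nat \<Rightarrow> 'a::comm_ring_1 poly \<Rightarrow> 'a poly" where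
  "cayley m p = (\<Sum>u\<le>m. smult (coeff p u) ([:-1, 1:] ^ u * [:1, 1:] ^ (m - u)))"

lemma cayley_add: "cayley m (p + q) = cayley m p + cayley m q"
  by (simp add: cayley_def smult_add_left sum.distrib)

lemma cayley_smult: "cayley m (smult a p) = smult a (cayley m p)"
  by (simp add: cayley_def smult_sum_right)

lemma cayley_sum: "cayley m (sum f A) = (\<Sum>a\<in>A. cayley m (f a))"
  by (induction A rule: infinite_finite_induct) (simp_all add: cayley_add cayley_def[of m 0])

lemma cayley_Suc_degree_le:
  assumes "degree p \<le> m"
  shows "cayley (Suc m) p = [:1, 1:] * cayley m p"
proof -
  have "cayley (Suc m) p = (\<Sum>u\<le>m. smult (coeff p u) ([:-1, 1:] ^ u * [:1, 1:] ^ (Suc m - u)))"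
    using assms by (simp add: cayley_def coeff_eq_0)
  also have "\<dots> = (\<Sum>u\<le>m. [:1, 1:] * smult (coeff p u) ([:-1, 1:] ^ u * [:1, 1:] ^ (m - u)))"
    by (rule sum.cong) (auto simp: Suc_diff_le algebra_simps)
  finally show ?thesis by (simp add: cayley_def sum_distrib_left)
qed

lemma cayley_Suc_pCons_0: "cayley (Suc m) (pCons 0 p) = [:-1, 1:] * cayley m p"
proof -
  have "cayley (Suc m) (pCons 0 p)
      = smult (coeff (pCons 0 p) 0) ([:-1, 1:] ^ 0 * [:1, 1:] ^ (Suc m - 0))
        + (\<Sum>u\<le>m. smult (coeff (pCons 0 p) (Suc u)) ([:-1, 1:] ^ Suc u * [:1, 1:] ^ (Suc m - Suc u)))"
    unfolding cayley_def by (rule sum.atMost_Suc_shift)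
  also have "\<dots> = (\<Sum>u\<le>m. [:-1, 1:] * smult (coeff p u) ([:-1, 1:] ^ u * [:1, 1:] ^ (m - u)))"
    by (simp add: algebra_simps)
  finally show ?thesis by (simp add: cayley_def sum_distrib_left)
qed

lemma cayley_Suc_linear_mult:
  assumes "degree p \<le> m"
  shows "cayley (Suc m) ([:1, s:] * p) = ([:1, 1:] + smult s [:-1, 1:]) * cayley m p"
proof -
  have "[:1, s:] * p = p + pCons 0 (smult s p)" by simp
  then show ?thesis
    by (simp only: cayley_add cayley_Suc_degree_le[OF assms] cayley_Suc_pCons_0 cayley_smult
        distrib_right mult_smult_left mult_smult_right)
qed

lemma degree_prod_list_linear:
  assumes "\<forall>p\<in>set L. \<exists>s. p = [:1, s:]"
  shows "degree (prod_list L) \<le> length L"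
  using assms
proof (induction L)
  case (Cons p L)
  then have "degree p \<le> 1" by auto
  then show ?case using Cons degree_mult_le[of p "prod_list L"] by simp
qed simp

lemma cayley_prod_list_linear:
  assumes "\<forall>p\<in>set L. \<exists>s. p = [:1, s:]"
  shows "cayley (length L) (prod_list L) = (\<Prod>p\<leftarrow>L. [:1, 1:] + smult (coeff p 1) [:-1, 1:])"
  using assms
proof (induction L)
  case Nil
  then show ?case by (simp add: cayley_def)
next
  case (Cons p L)
  then obtain s where "p = [:1, s:]" by auto
  then show ?case
    using Cons cayley_Suc_linear_mult[OF degree_prod_list_linear, of L] by simp
qed

lemma prod_if_const_monom:
  fixes a :: "'a::comm_semiring_1"
  assumes "finite J"
  shows "(\<Prod>j\<in>J. if P j then [:0, a:] else [:a:]) = smult (a ^ card J) (monom 1 (card {j\<in>J. P j}))"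
  using assms
proof (induction J rule: finite_induct)
  case (insert j J)
  have "{i\<in>insert j J. P i} = (if P j then insert j {i\<in>J. P i} else {i\<in>J. P i})" by auto
  with insert show ?case
    by (cases "P j") (simp_all add: mult_monom monom_Suc mult.commute mult.left_commute)
qed simp


lemma bij_betw_permutes_permutations_of_set:
  "bij_betw (\<lambda>\<pi>. map \<pi> [1..<Suc m]) {\<pi>. \<pi> permutes {1..m}} (permutations_of_set {1..m})"
proof -
  let ?f = "\<lambda>\<pi>. map \<pi> [1..<Suc m]" and ?S = "{\<pi>. \<pi> permutes {1..m}}"
  have inj: "inj_on ?f ?S"
  proof (rule inj_onI)
    fix \<pi> \<sigma> assume \<pi>: "\<pi> \<in> ?S" and \<sigma>: "\<sigma> \<in> ?S" and "?f \<pi> = ?f \<sigma>"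
    then have eq: "\<pi> x = \<sigma> x" if "x \<in> {1..m}" for x
      using that by (simp add: atLeastLessThanSuc_atLeastAtMost del: upt_Suc)
    show "\<pi> = \<sigma>"
    proof
      fix x show "\<pi> x = \<sigma> x"
        using eq \<pi> \<sigma> by (cases "x \<in> {1..m}") (simp_all add: permutes_not_in)
    qed
  qed
  have sub: "?f ` ?S \<subseteq> permutations_of_set {1..m}"
  proof
    fix ys assume "ys \<in> ?f ` ?S"
    then obtain \<pi> where \<pi>: "\<pi> permutes {1..m}" "ys = ?f \<pi>" by auto
    then have "set ys = {1..m}"
      using permutes_image[OF \<pi>(1)] by (simp add: atLeastLessThanSuc_atLeastAtMost del: upt_Suc)
    moreover have "distinct ys"
      using \<pi> permutes_inj_on[OF \<pi>(1)]
      by (simp add: distinct_map atLeastLessThanSuc_atLeastAtMost del: upt_Suc)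
    ultimately show "ys \<in> permutations_of_set {1..m}" by (rule permutations_of_setI)
  qed
  have "card (?f ` ?S) = card (permutations_of_set {1..m})"
    using card_image[OF inj] card_permutations[of "{1..m}" m] by simp
  then show ?thesis using inj sub by (simp add: bij_betw_def card_subset_eq)
qed

lemma alt_factors_map_upt:
  "alt_factors c e (map f [Suc e..<Suc e + Suc m]) = map (\<lambda>j. alt_factor c j (f j) (f (Suc j))) [Suc e..<Suc e + m]"
proof (induction m arbitrary: e)
  case (Suc m)
  have "[Suc e..<Suc e + Suc (Suc m)] = Suc e # Suc (Suc e) # [Suc (Suc (Suc e))..<Suc e + Suc (Suc m)]"
    "[Suc e..<Suc e + Suc m] = Suc e # [Suc (Suc e)..<Suc (Suc e) + m]"
    by (simp_all add: upt_conv_Cons del: upt_Suc)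
  moreover have "[Suc (Suc e)..<Suc (Suc e) + Suc m] = Suc (Suc e) # [Suc (Suc (Suc e))..<Suc e + Suc (Suc m)]"
    by (simp add: upt_conv_Cons del: upt_Suc)
  ultimately show ?case using Suc.IH[of "Suc e"] by simp
qed (simp add: upt_conv_Cons del: upt_Suc)

lemma cayley_alt_factors_permutes:
  assumes "\<pi> permutes {1..Suc n}"
  shows "cayley n (prod_list (alt_factors 1 0 (map \<pi> [1..<Suc (Suc n)])))
       = smult (2 ^ n) (monom 1 (altdes (Suc n) \<pi>))"
proof -
  let ?L = "alt_factors 1 0 (map \<pi> [1..<Suc (Suc n)])"
  have L: "?L = map (\<lambda>j. alt_factor 1 j (\<pi> j) (\<pi> (Suc j))) [1..<Suc n]"
    using alt_factors_map_upt[of 1 0 \<pi> n] by simp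
  have "\<forall>p\<in>set ?L. \<exists>s. p = [:1, s:]" using alt_factors_linear by blast
  moreover have "length ?L = n" using L by simp
  ultimately have "cayley n (prod_list ?L) = (\<Prod>p\<leftarrow>?L. [:1, 1:] + smult (coeff p 1) [:-1, 1:])"
    using cayley_prod_list_linear by metis
  also have "\<dots> = (\<Prod>j\<leftarrow>[1..<Suc n]. if altdes_at j (\<pi> j) (\<pi> (Suc j)) then [:0, 2:] else [:2:])"
    unfolding L map_map by (intro arg_cong[where f = prod_list] map_cong refl) (simp add: alt_factor_def)
  also have "\<dots> = (\<Prod>j\<in>{1..<Suc n}. if altdes_at j (\<pi> j) (\<pi> (Suc j)) then [:0, 2:] else [:2:])"
    by (simp only: prod.distinct_set_conv_list[OF distinct_upt, symmetric] set_upt)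
  also have "\<dots> = smult (2 ^ n) (monom 1 (card {j\<in>{1..<Suc n}. altdes_at j (\<pi> j) (\<pi> (Suc j))}))"
    by (simp only: prod_if_const_monom[OF finite_atLeastLessThan] card_atLeastLessThan diff_Suc_1)
  also have "card {j\<in>{1..<Suc n}. altdes_at j (\<pi> j) (\<pi> (Suc j))} = altdes (Suc n) \<pi>"
    by (simp add: altdes_def altdes_at_def)
  finally show ?thesis .
qed

lemma smult_altdes_poly:
  "smult (2 ^ n) (\<Sum>\<pi>\<in>{\<pi>. \<pi> permutes {1..Suc n}}. monom (1::int) (altdes (Suc n) \<pi>))
     = cayley n (rev_deriv_poly n)"
proof -
  have "smult (2 ^ n) (\<Sum>\<pi>\<in>{\<pi>. \<pi> permutes {1..Suc n}}. monom (1::int) (altdes (Suc n) \<pi>))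
      = (\<Sum>\<pi>\<in>{\<pi>. \<pi> permutes {1..Suc n}}. cayley n (prod_list (alt_factors 1 0 (map \<pi> [1..<Suc (Suc n)]))))"
    unfolding smult_sum_right
  proof (rule sum.cong[OF refl])
    fix \<pi> assume "\<pi> \<in> {\<pi>. \<pi> permutes {1..Suc n}}"
    then show "smult (2 ^ n) (monom 1 (altdes (Suc n) \<pi>))
        = cayley n (prod_list (alt_factors 1 0 (map \<pi> [1..<Suc (Suc n)])))"
      using cayley_alt_factors_permutes[of \<pi> n] by simp
  qed
  also have "\<dots> = (\<Sum>xs\<in>permutations_of_set {1..Suc n}. cayley n (prod_list (alt_factors 1 0 xs)))"
    by (rule sum.reindex_bij_betw[OF bij_betw_permutes_permutations_of_set])
  also have "\<dots> = cayley n (rev_deriv_poly n)"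
    by (simp add: cayley_sum alt_poly_def flip: alt_poly_eq_rev_deriv_poly)
  finally show ?thesis .
qed

lemma coeff_cayley_rev_deriv_poly:
  "coeff (cayley n (rev_deriv_poly n)) s
     = (\<Sum>k=0..(n+1) div 2. (int n - 2 * int k + 1) * pcoeff n (n + 1 - 2*k) * Ecoef n k s)"
proof -
  define f where "f u = rev_deriv_coeff n u * coeff ([:-1, 1:] ^ u * [:1, 1:] ^ (n - u)) s" for u
  define N where "N = (n + 1) div 2"
  have "coeff (cayley n (rev_deriv_poly n)) s = (\<Sum>u\<le>n. f u)"
    by (simp add: cayley_def coeff_sum coeff_rev_deriv_poly f_def)
  also have "\<dots> = (\<Sum>u\<le>Suc (2 * N). f u)"
    by (rule sum.mono_neutral_left) (auto simp: f_def rev_deriv_coeff_def N_def)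
  also have "\<dots> = (\<Sum>k\<le>N. f (2 * k) + f (Suc (2 * k)))"
    by (rule sum.in_pairs_0)
  also have "\<dots> = (\<Sum>k=0..N. f (2 * k))"
    by (simp add: f_def rev_deriv_coeff_odd atLeast0AtMost)
  also have "\<dots> = (\<Sum>k=0..N. (int n - 2 * int k + 1) * pcoeff n (n + 1 - 2*k) * Ecoef n k s)"
  proof (rule sum.cong[OF refl])
    fix k assume "k \<in> {0..N}"
    then have k: "2 * k \<le> n + 1" by (auto simp: N_def)
    have "[:-1, 1:] = - ([:1, -1:] :: int poly)" by simp
    then have "[:-1, 1:] ^ (2 * k) = ([:1, -1:] ^ (2 * k) :: int poly)"
      by (simp only: power_mult power2_minus)
    with k show "f (2 * k) = (int n - 2 * int k + 1) * pcoeff n (n + 1 - 2*k) * Ecoef n k s"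
      by (simp add: f_def rev_deriv_coeff_def Ecoef_def of_nat_diff)
  qed
  finally show ?thesis by (simp add: N_def)
qed

theorem mainTheorem2:
  fixes n s :: nat
  assumes "n \<ge> 2" and "1 \<le> s" and "s \<le> n"
  shows "real (altEuler (n+1) s) =
    (1 / 2 ^ n) * (\<Sum>k=0..(n+1) div 2.
       real_of_int ((int n - 2 * int k + 1) * pcoeff n (n + 1 - 2*k) * Ecoef n k s))"
  \<comment> \<open>The identity holds for all \<open>n\<close> and \<open>s\<close>.\<close>
proof -
  let ?A = "\<Sum>\<pi>\<in>{\<pi>. \<pi> permutes {1..Suc n}}. monom (1::int) (altdes (Suc n) \<pi>)"
  have "coeff ?A s \<ge> 0" by (simp add: coeff_sum coeff_monom sum_nonneg)
  then have "real (altEuler (n+1) s) = (1 / 2 ^ n) * real_of_int (2 ^ n * coeff ?A s)"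
    by (simp add: altEuler_def)
  also have "2 ^ n * coeff ?A s
      = (\<Sum>k=0..(n+1) div 2. (int n - 2 * int k + 1) * pcoeff n (n + 1 - 2*k) * Ecoef n k s)"
    using arg_cong[OF smult_altdes_poly[of n], of "\<lambda>p. coeff p s"] coeff_cayley_rev_deriv_poly by simp
  finally show ?thesis by (simp only: of_int_sum)
qed

end
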